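(* Let $k,l,N$ be positive integers with $l>1$, and let proper trigonometric polynomials $\mu_0,\dots,\mu_N$ and $\varphi_1,\dots,\varphi_N$ on $\mathbb{T}^2$ satisfy $$-\partial_1^k\varphi_1=\mu_0,\qquad \partial_2^l\varphi_j-\partial_1^k\varphi_{j+1}=\mu_j\ (j=1,\dots,N-1),\qquad \partial_2^l\varphi_N=\mu_N.$$ Then $$\sum_{j=1}^N\|\varphi_j\|_{W_2^{\frac{k-1}{2},0}(\mathbb{T}^2)}\leqslant C\sum_{j=0}^N\|\mu_j\|_{L^1(\mathbb{T}^2)},$$ where $C$ does not depend on the functions involved.
   Context: The torus is parametrised by $t\mapsto e^{2\pi it}$; $\partial_1,\partial_2$ are derivatives in the parameters; Fourier coefficients are $\hat f(m,n)$. A function is proper if $\hat f(m,n)=0$ whenever $m=0$ or $n=0$. For $\alpha,\beta\geqslant0$, $W_2^{\alpha,\beta}(\mathbb{T}^2)$ consists of distributions $f$ with $\{(1+m^2)^{\alpha/2}(1+n^2)^{\beta/2}\hat f(m,n)\}\in l^2(\mathbb{Z}^2)$, normed by the $l^2$-norm of this sequence. *)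

theory Defs
  imports "HOL-Analysis.Analysis"
begin

text \<open>A trigonometric polynomial on the torus T^2 is represented by its Fourier
coefficient array c :: int \<times> int \<Rightarrow> complex with finite support; the function
itself is tp_eval c, evaluated in the parameters (x,y) \<in> [0,1]^2 of the
parametrisation t \<mapsto> exp(2 pi i t).\<close>

type_synonym coeffs = "int \<times> int \<Rightarrow> complex"

definition trig_poly :: "coeffs \<Rightarrow> bool" where
  "trig_poly c \<longleftrightarrow> finite {p. c p \<noteq> 0}"

definition proper :: "coeffs \<Rightarrow> bool" where
  "proper c \<longleftrightarrow> (\<forall>m n. (m = 0 \<or> n = 0) \<longrightarrow> c (m, n) = 0)"

definition tp_eval :: "coeffs \<Rightarrow> real \<times> real \<Rightarrow> complex" where
  "tp_eval c z = (\<Sum>p\<in>{p. c p \<noteq> 0}.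
      c p * exp (2 * of_real pi * \<i> * of_real (of_int (fst p) * fst z + of_int (snd p) * snd z)))"

definition d1 :: "nat \<Rightarrow> coeffs \<Rightarrow> coeffs" where
  "d1 k c = (\<lambda>(m, n). (2 * of_real pi * \<i> * of_int m) ^ k * c (m, n))"

definition d2 :: "nat \<Rightarrow> coeffs \<Rightarrow> coeffs" where
  "d2 k c = (\<lambda>(m, n). (2 * of_real pi * \<i> * of_int n) ^ k * c (m, n))"

text \<open>L^1 norm on T^2 (normalised Haar measure = Lebesgue measure on [0,1]^2).\<close>
definition L1_norm :: "coeffs \<Rightarrow> real" where
  "L1_norm c = integral (cbox (0, 0) (1, 1)) (\<lambda>z. norm (tp_eval c z))"

text \<open>Mixed Sobolev norm W_2^{alpha,beta}; for finitely supported coefficients the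
l^2 norm is the finite sum below.\<close>
definition W2_norm :: "real \<Rightarrow> real \<Rightarrow> coeffs \<Rightarrow> real" where
  "W2_norm \<alpha> \<beta> c = sqrt (\<Sum>p\<in>{p. c p \<noteq> 0}.
      ((1 + (of_int (fst p))\<^sup>2) powr (\<alpha>/2) * (1 + (of_int (snd p))\<^sup>2) powr (\<beta>/2) * cmod (c p))\<^sup>2)"

end

theory Submission
  imports Defs
begin

text \<open>At a fixed frequency (m,n) the system is a chain of scalar relations with
  a = (2 pi i m)^k and b = (2 pi i n)^l:  -a phi_1 = mu_0,  b phi_j - a phi_(j+1) = mu_j,
  b phi_N = mu_N. Propagating from the end of the chain at which the larger of |a|, |b|
  acts gives max(|a|,|b|) |phi_j(m,n)| <= sum_i |mu_i(m,n)| <= sum_i ||mu_i||_L1, since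
  Fourier coefficients are bounded by the L^1 norm. Splitting
  max(|m|^k,|n|^l)^2 >= |m|^(k(2-b)) |n|^(lb) with 1/l < b < 1 then bounds the squared
  Sobolev weight (1+m^2)^((k-1)/2) / max(|m|^k,|n|^l)^2 by a multiple of
  |m|^(-(k(1-b)+1)) |n|^(-lb), which is summable over m, n /= 0.\<close>

section \<open>Fourier coefficients are bounded by the L^1 norm\<close>

lemma integral_exp_2pi_int:
  fixes q :: int
  shows "integral {0..1} (\<lambda>t::real. exp ((2 * of_real pi * \<i> * of_int q) * complex_of_real t))
    = (if q = 0 then 1 else 0)"
proof (cases "q = 0")
  case True
  then show ?thesis by simp
next
  case False
  define a where "a = 2 * of_real pi * \<i> * (of_int q :: complex)"
  have a0: "a \<noteq> 0" using False by (simp add: a_def)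
  have "((\<lambda>x. exp (a * x) / a) has_vector_derivative exp (a * t)) (at t within {0..1::real})"
    for t :: real
  proof -
    have "((\<lambda>x. exp (a * x) / a) has_field_derivative exp (a * of_real t)) (at (of_real t))"
      using a0 by (auto intro!: derivative_eq_intros)
    from has_complex_derivative_imp_has_vector_derivative[OF
        has_field_derivative_at_within[OF this, of "cbox (of_real 0) (of_real 1)"]]
    show ?thesis by (simp add: o_def cbox_interval)
  qed
  then have "((\<lambda>t. exp (a * of_real t)) has_integral
      exp (a * complex_of_real 1) / a - exp (a * of_real 0) / a) {0..1}"
    by (intro fundamental_theorem_of_calculus) auto
  moreover have "exp (a * 1) = 1"
  proof -
    have "exp (a * 1) = cis (2 * pi * of_int q)"
      by (simp add: a_def cis_conv_exp mult_ac)
    also have "\<dots> = 1" by (rule cis_multiple_2pi) simp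
    finally show ?thesis .
  qed
  ultimately show ?thesis using False by (simp add: integral_unique a_def)
qed

definition torus_char :: "int \<times> int \<Rightarrow> real \<times> real \<Rightarrow> complex" where
  "torus_char q z = exp (2 * of_real pi * \<i> * of_real (of_int (fst q) * fst z + of_int (snd q) * snd z))"

lemma torus_char_split:
  "torus_char q (x, y) = exp ((2 * of_real pi * \<i> * of_int (fst q)) * complex_of_real x) *
     exp ((2 * of_real pi * \<i> * of_int (snd q)) * complex_of_real y)"
  unfolding torus_char_def by (simp add: exp_add[symmetric] algebra_simps)

lemma torus_char_mult: "torus_char q z * torus_char r z = torus_char (fst q + fst r, snd q + snd r) z"
  unfolding torus_char_def by (simp add: exp_add[symmetric] algebra_simps)

lemma norm_torus_char [simp]: "norm (torus_char q z) = 1"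
  unfolding torus_char_def by (simp add: norm_exp_eq_Re)

lemma continuous_on_torus_char: "continuous_on S (torus_char q)"
  unfolding torus_char_def by (intro continuous_intros)

lemma integral_torus_char:
  "integral (cbox (0,0) (1,1)) (torus_char q) = (if q = (0,0) then 1 else 0)"
proof -
  have "integral (cbox (0,0) (1,1)) (torus_char q)
      = integral (cbox 0 1) (\<lambda>x. integral (cbox 0 1) (\<lambda>y. torus_char q (x, y)))"
    by (rule integral_prod_continuous[OF continuous_on_torus_char])
  also have "\<dots> = integral {0..1} (\<lambda>x. exp ((2 * of_real pi * \<i> * of_int (fst q)) * complex_of_real x) *
      integral {0..1} (\<lambda>y. exp ((2 * of_real pi * \<i> * of_int (snd q)) * complex_of_real y)))"
    by (simp add: torus_char_split cbox_interval)
  also have "\<dots> = (if q = (0,0) then 1 else 0)"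
    by (cases q) (simp add: integral_exp_2pi_int)
  finally show ?thesis .
qed

lemma tp_eval_eq_sum_torus_char: "tp_eval c z = (\<Sum>q\<in>{p. c p \<noteq> 0}. c q * torus_char q z)"
  unfolding tp_eval_def torus_char_def by simp

lemma continuous_on_tp_eval: "continuous_on S (tp_eval c)"
  unfolding tp_eval_eq_sum_torus_char[abs_def]
  by (intro continuous_intros continuous_on_torus_char)

lemma norm_coeff_le_L1_norm:
  assumes "trig_poly c"
  shows "cmod (c p) \<le> L1_norm c"
proof -
  let ?S = "{p. c p \<noteq> 0}" and ?Q = "cbox (0::real, 0::real) (1, 1)"
  let ?e = "torus_char (- fst p, - snd p)"
  have fin: "finite ?S" using assms unfolding trig_poly_def .
  have shift: "tp_eval c z * ?e z = (\<Sum>q\<in>?S. c q * torus_char (fst q - fst p, snd q - snd p) z)" for z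
    unfolding tp_eval_eq_sum_torus_char sum_distrib_right
    by (intro sum.cong refl) (simp add: mult.assoc torus_char_mult)
  have "integral ?Q (\<lambda>z. tp_eval c z * ?e z)
      = (\<Sum>q\<in>?S. c q * integral ?Q (torus_char (fst q - fst p, snd q - snd p)))"
    unfolding shift
    by (subst integral_sum) (auto simp: fin integrable_continuous continuous_on_torus_char)
  also have "\<dots> = (\<Sum>q\<in>?S. if q = p then c q else 0)"
    by (intro sum.cong refl) (auto simp: integral_torus_char prod_eq_iff)
  also have "\<dots> = c p" using fin by (simp add: sum.delta)
  finally have coeff: "c p = integral ?Q (\<lambda>z. tp_eval c z * ?e z)" by simp
  have "cmod (c p) \<le> integral ?Q (\<lambda>z. norm (tp_eval c z))"
    unfolding coeff
  proof (rule integral_norm_bound_integral)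
    show "(\<lambda>z. tp_eval c z * ?e z) integrable_on ?Q"
      by (intro integrable_continuous continuous_on_mult continuous_on_tp_eval continuous_on_torus_char)
    show "(\<lambda>z. norm (tp_eval c z)) integrable_on ?Q"
      by (intro integrable_continuous continuous_on_norm continuous_on_tp_eval)
  qed (simp add: norm_mult)
  then show ?thesis unfolding L1_norm_def .
qed

section \<open>Finite sums of negative powers over nonzero lattice points\<close>

definition zeta_sum :: "real \<Rightarrow> real" where
  "zeta_sum s = (\<Sum>n. real (Suc n) powr (-s))"

lemma summable_Suc_powr: "s > 1 \<Longrightarrow> summable (\<lambda>n. real (Suc n) powr (-s))"
  using summable_Suc_iff[of "\<lambda>n. real n powr (-s)"] summable_real_powr_iff[of "-s"] by simp

lemma zeta_sum_nonneg: "s > 1 \<Longrightarrow> zeta_sum s \<ge> 0"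
  unfolding zeta_sum_def by (intro suminf_nonneg summable_Suc_powr) auto

lemma sum_pos_int_powr_le_zeta_sum:
  assumes "finite G" "G \<subseteq> {0<..}" "s > 1"
  shows "(\<Sum>m\<in>G. \<bar>real_of_int m\<bar> powr (-s)) \<le> zeta_sum s"
proof -
  have inj: "inj_on (\<lambda>m. nat m - 1) G"
  proof (rule inj_onI)
    fix x y assume "x \<in> G" "y \<in> G" "nat x - 1 = nat y - 1"
    moreover have "x > 0" "y > 0" using assms(2) \<open>x \<in> G\<close> \<open>y \<in> G\<close> by auto
    ultimately show "x = y" by simp
  qed
  have "(\<Sum>m\<in>G. \<bar>real_of_int m\<bar> powr (-s)) = (\<Sum>n\<in>(\<lambda>m. nat m - 1) ` G. real (Suc n) powr (-s))"
    by (subst sum.reindex[OF inj]) (intro sum.cong refl, use assms(2) in auto)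
  also have "\<dots> \<le> zeta_sum s"
    unfolding zeta_sum_def by (intro sum_le_suminf summable_Suc_powr) (auto simp: assms)
  finally show ?thesis .
qed

lemma sum_int_powr_le_zeta_sum:
  assumes "finite F" "0 \<notin> F" "s > 1"
  shows "(\<Sum>m\<in>F. \<bar>real_of_int m\<bar> powr (-s)) \<le> 2 * zeta_sum s"
proof -
  let ?f = "\<lambda>m. \<bar>real_of_int m\<bar> powr (-s)"
  let ?P = "{m\<in>F. m > 0}" and ?Q = "{m\<in>F. m < 0}"
  have split: "F = ?P \<union> ?Q" using assms(2) by (auto simp: neq_iff) (metis not_less_iff_gr_or_eq)
  have "sum ?f F = sum ?f ?P + sum ?f ?Q"
    by (subst split, rule sum.union_disjoint) (use assms in auto)
  also have "sum ?f ?Q = sum ?f (uminus ` ?Q)"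
    by (subst sum.reindex) (auto simp: inj_on_def)
  also have "sum ?f ?P \<le> zeta_sum s"
    by (rule sum_pos_int_powr_le_zeta_sum) (use assms in auto)
  also have "sum ?f (uminus ` ?Q) \<le> zeta_sum s"
    by (rule sum_pos_int_powr_le_zeta_sum) (use assms in auto)
  finally show ?thesis by simp
qed

lemma sum_lattice_powr_le_zeta_sum:
  assumes "finite S" "\<forall>p\<in>S. fst p \<noteq> 0 \<and> snd p \<noteq> 0" "s > 1" "t > 1"
  shows "(\<Sum>p\<in>S. \<bar>real_of_int (fst p)\<bar> powr (-s) * \<bar>real_of_int (snd p)\<bar> powr (-t))
    \<le> 2 * zeta_sum s * (2 * zeta_sum t)"
proof -
  have "(\<Sum>p\<in>S. \<bar>real_of_int (fst p)\<bar> powr (-s) * \<bar>real_of_int (snd p)\<bar> powr (-t))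
      \<le> (\<Sum>p\<in>fst ` S \<times> snd ` S. \<bar>real_of_int (fst p)\<bar> powr (-s) * \<bar>real_of_int (snd p)\<bar> powr (-t))"
    by (rule sum_mono2) (auto simp: assms(1) rev_image_eqI)
  also have "\<dots> = (\<Sum>m\<in>fst ` S. \<bar>real_of_int m\<bar> powr (-s)) * (\<Sum>n\<in>snd ` S. \<bar>real_of_int n\<bar> powr (-t))"
    by (simp add: sum_product sum.cartesian_product case_prod_beta)
  also have "\<dots> \<le> 2 * zeta_sum s * (2 * zeta_sum t)"
    by (intro mult_mono sum_int_powr_le_zeta_sum sum_nonneg) (use assms zeta_sum_nonneg in auto)
  finally show ?thesis .
qed

section \<open>The scalar chain at a single frequency\<close>

lemma chain_forward_le_sum:
  fixes y u :: "nat \<Rightarrow> real"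
  assumes "1 \<le> j" "j \<le> N" "y 1 \<le> u 0"
    and "\<And>i. 1 \<le> i \<Longrightarrow> i < N \<Longrightarrow> y (Suc i) \<le> y i + u i"
  shows "y j \<le> (\<Sum>i<j. u i)"
  using assms(1,2)
proof (induction j rule: dec_induct)
  case base
  then show ?case using assms(3) by simp
next
  case (step i)
  then show ?case using assms(4)[of i] by simp
qed

lemma chain_backward_le_sum:
  fixes y u :: "nat \<Rightarrow> real"
  assumes "j \<le> N" "1 \<le> j" "y N \<le> u N"
    and "\<And>i. 1 \<le> i \<Longrightarrow> i < N \<Longrightarrow> y i \<le> y (Suc i) + u i"
  shows "y j \<le> (\<Sum>i=j..N. u i)"
  using assms(1,2)
proof (induction j rule: inc_induct)
  case base
  then show ?case using assms(3) by simp
next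
  case (step i)
  then show ?case using assms(4)[of i] by (simp add: sum.atLeast_Suc_atMost)
qed

lemma chain_bound:
  fixes A B :: real and x u :: "nat \<Rightarrow> real"
  assumes x: "\<And>i. x i \<ge> 0" and u: "\<And>i. u i \<ge> 0"
    and first: "A * x 1 \<le> u 0"
    and down: "\<And>i. 1 \<le> i \<Longrightarrow> i < N \<Longrightarrow> A * x (Suc i) \<le> B * x i + u i"
    and up: "\<And>i. 1 \<le> i \<Longrightarrow> i < N \<Longrightarrow> B * x i \<le> A * x (Suc i) + u i"
    and last: "B * x N \<le> u N"
    and j: "1 \<le> j" "j \<le> N"
  shows "max A B * x j \<le> (\<Sum>i\<le>N. u i)"
proof (cases "B \<le> A")
  case True
  have "A * x j \<le> (\<Sum>i<j. u i)"
  proof (rule chain_forward_le_sum[of j N "\<lambda>i. A * x i" u, OF j first])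
    show "A * x (Suc i) \<le> A * x i + u i" if "1 \<le> i" "i < N" for i
      using down[OF that] mult_right_mono[OF True x[of i]] by linarith
  qed
  also have "\<dots> \<le> (\<Sum>i\<le>N. u i)" using j u by (intro sum_mono2) auto
  finally show ?thesis using True by (simp add: max_def)
next
  case False
  have "B * x j \<le> (\<Sum>i=j..N. u i)"
  proof (rule chain_backward_le_sum[of j N "\<lambda>i. B * x i" u, OF j(2,1) last])
    show "B * x i \<le> B * x (Suc i) + u i" if "1 \<le> i" "i < N" for i
      using up[OF that] False mult_right_mono[of A B "x (Suc i)"] x[of "Suc i"] by linarith
  qed
  also have "\<dots> \<le> (\<Sum>i\<le>N. u i)" using u by (intro sum_mono2) auto
  finally show ?thesis using False by (simp add: max_def)
qed

lemma norm_chain_solution_le: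
  fixes a b :: "'a::real_normed_field" and f g :: "nat \<Rightarrow> 'a"
  assumes first: "- (a * f 1) = g 0"
    and middle: "\<And>i. 1 \<le> i \<Longrightarrow> i < N \<Longrightarrow> b * f i - a * f (Suc i) = g i"
    and last: "b * f N = g N"
    and j: "1 \<le> j" "j \<le> N"
  shows "max (norm a) (norm b) * norm (f j) \<le> (\<Sum>i\<le>N. norm (g i))"
proof (rule chain_bound[OF _ _ _ _ _ _ j])
  show "norm a * norm (f 1) \<le> norm (g 0)"
    using first by (metis norm_minus_cancel norm_mult order_refl)
  show "norm b * norm (f N) \<le> norm (g N)"
    using last by (metis norm_mult order_refl)
  show "norm a * norm (f (Suc i)) \<le> norm b * norm (f i) + norm (g i)" if "1 \<le> i" "i < N" for i
  proof -
    have "a * f (Suc i) = b * f i - g i"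
      using middle[OF that] by (simp add: algebra_simps)
    then show ?thesis by (metis norm_mult norm_triangle_ineq4)
  qed
  show "norm b * norm (f i) \<le> norm a * norm (f (Suc i)) + norm (g i)" if "1 \<le> i" "i < N" for i
  proof -
    have "b * f i = a * f (Suc i) + g i"
      using middle[OF that] by (simp add: algebra_simps)
    then show ?thesis by (metis norm_mult norm_triangle_ineq)
  qed
qed auto

lemma norm_2pi_freq_power: "cmod ((2 * of_real pi * \<i> * of_int m) ^ k) = (2 * pi * \<bar>real_of_int m\<bar>) ^ k"
  by (simp add: norm_power norm_mult)

lemma abs_power_le_2pi_abs_power: "\<bar>real_of_int m\<bar> ^ k \<le> (2 * pi * \<bar>real_of_int m\<bar>) ^ k"
  using pi_gt3 by (intro power_mono) (auto simp: mult_le_cancel_right1)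

lemma coeff_mult_max_le_sum_L1_norm:
  fixes k l N :: nat and \<mu> \<phi> :: "nat \<Rightarrow> coeffs"
  assumes tp: "\<forall>j\<le>N. trig_poly (\<mu> j)"
    and eq0: "\<forall>p. - d1 k (\<phi> 1) p = \<mu> 0 p"
    and eq: "\<forall>j\<in>{1..<N}. \<forall>p. d2 l (\<phi> j) p - d1 k (\<phi> (Suc j)) p = \<mu> j p"
    and eqN: "\<forall>p. d2 l (\<phi> N) p = \<mu> N p"
    and j: "j \<in> {1..N}"
  shows "cmod (\<phi> j p) * max (\<bar>real_of_int (fst p)\<bar>^k) (\<bar>real_of_int (snd p)\<bar>^l)
    \<le> (\<Sum>i=0..N. L1_norm (\<mu> i))"
proof -
  obtain m n where p: "p = (m, n)" by (cases p)
  define a where "a = (2 * of_real pi * \<i> * of_int m :: complex) ^ k"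
  define b where "b = (2 * of_real pi * \<i> * of_int n :: complex) ^ l"
  have d1: "d1 k c (m, n) = a * c (m, n)" and d2: "d2 l c (m, n) = b * c (m, n)" for c
    unfolding d1_def d2_def a_def b_def by simp_all
  have "max (\<bar>real_of_int m\<bar>^k) (\<bar>real_of_int n\<bar>^l) * cmod (\<phi> j (m, n))
      \<le> max (cmod a) (cmod b) * cmod (\<phi> j (m, n))"
    unfolding a_def b_def norm_2pi_freq_power
    using abs_power_le_2pi_abs_power[of m k] abs_power_le_2pi_abs_power[of n l]
    by (intro mult_right_mono) auto
  also have "\<dots> \<le> (\<Sum>i\<le>N. cmod (\<mu> i (m, n)))"
    using eq0 eq eqN j by (intro norm_chain_solution_le) (auto simp flip: d1 d2)
  also have "\<dots> \<le> (\<Sum>i=0..N. L1_norm (\<mu> i))"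
    using tp by (auto simp: atMost_atLeast0 intro!: sum_mono norm_coeff_le_L1_norm)
  finally show ?thesis by (simp add: p mult.commute)
qed

section \<open>Summing the pointwise bound in the Sobolev norm\<close>

lemma sobolev_weight_le:
  fixes X Y b :: real and k l :: nat
  assumes X: "X \<ge> 1" and Y: "Y \<ge> 1" and "k > 0" and b: "0 \<le> b" "b \<le> 2"
  shows "(1 + X\<^sup>2) powr ((real k - 1)/2) / (max (X^k) (Y^l))\<^sup>2
     \<le> 2 powr ((real k - 1)/2) * X powr (-(real k * (1 - b) + 1)) * Y powr (-(real l * b))"
proof -
  define a where "a = (real k - 1)/2"
  define M where "M = max (X^k) (Y^l)"
  have M1: "M \<ge> 1" using X by (simp add: M_def le_max_iff_disj one_le_power)
  have numerator: "(1 + X\<^sup>2) powr a \<le> 2 powr a * X powr (real k - 1)"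
  proof -
    have "(1 + X\<^sup>2) powr a \<le> (2 * X\<^sup>2) powr a"
      using X \<open>k > 0\<close> by (intro powr_mono2) (auto simp: a_def one_le_power)
    also have "\<dots> = 2 powr a * (X powr 2) powr a"
      using X powr_realpow[of X 2] by (simp add: powr_mult)
    also have "\<dots> = 2 powr a * X powr (real k - 1)"
      by (simp add: powr_powr a_def diff_divide_distrib)
    finally show ?thesis .
  qed
  have denominator: "X powr (real k * (2 - b)) * Y powr (real l * b) \<le> M\<^sup>2"
  proof -
    have "(X powr real k) powr (2 - b) * (Y powr real l) powr b \<le> M powr (2 - b) * M powr b"
      using b X Y by (intro mult_mono powr_mono2) (auto simp: M_def powr_realpow)
    also have "\<dots> = M powr 2"
      by (simp add: powr_add[symmetric])
    also have "\<dots> = M\<^sup>2"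
      using M1 by (simp add: powr_realpow)
    finally show ?thesis by (simp add: powr_powr)
  qed
  have "(1 + X\<^sup>2) powr a / M\<^sup>2
      \<le> 2 powr a * X powr (real k - 1) / (X powr (real k * (2 - b)) * Y powr (real l * b))"
    using numerator denominator X Y by (intro frac_le) auto
  also have "\<dots> = 2 powr a * X powr (-(real k * (2 - b) - (real k - 1))) * Y powr (-(real l * b))"
    using X Y by (simp add: powr_minus powr_diff divide_simps)
  finally show ?thesis by (simp add: a_def M_def algebra_simps)
qed

lemma sobolev_term_le:
  fixes m n :: int and z :: complex and b T :: real and k l :: nat
  assumes "m \<noteq> 0" "n \<noteq> 0" "k > 0" "0 \<le> b" "b \<le> 2"
    and bound: "cmod z * max (\<bar>real_of_int m\<bar>^k) (\<bar>real_of_int n\<bar>^l) \<le> T"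
  shows "((1 + (real_of_int m)\<^sup>2) powr ((real k - 1)/2/2) * (1 + (real_of_int n)\<^sup>2) powr (0/2) * cmod z)\<^sup>2
    \<le> T\<^sup>2 * (2 powr ((real k - 1)/2) *
          (\<bar>real_of_int m\<bar> powr (-(real k * (1 - b) + 1)) * \<bar>real_of_int n\<bar> powr (-(real l * b))))"
proof -
  define a where "a = (real k - 1)/2"
  define X where "X = \<bar>real_of_int m\<bar>"
  define Y where "Y = \<bar>real_of_int n\<bar>"
  define M where "M = max (X^k) (Y^l)"
  have X1: "X \<ge> 1" and Y1: "Y \<ge> 1" using assms(1,2) by (auto simp: X_def Y_def)
  have M1: "M \<ge> 1" using X1 by (simp add: M_def le_max_iff_disj one_le_power)
  have "cmod z \<le> T / M"
    using bound M1 by (simp add: field_simps X_def Y_def M_def)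
  then have z_sq: "(cmod z)\<^sup>2 \<le> T\<^sup>2 / M\<^sup>2"
    by (metis norm_ge_zero power_divide power_mono)
  have "((1 + (real_of_int m)\<^sup>2) powr (a/2) * (1 + (real_of_int n)\<^sup>2) powr (0/2) * cmod z)\<^sup>2
      = (1 + X\<^sup>2) powr a * (cmod z)\<^sup>2"
  proof -
    have "((1 + X\<^sup>2) powr (a/2))\<^sup>2 = (1 + X\<^sup>2) powr a"
      by (simp add: power2_eq_square powr_add[symmetric])
    moreover have "1 + (real_of_int n)\<^sup>2 \<noteq> 0"
      by (metis add_pos_nonneg less_irrefl zero_le_power2 zero_less_one)
    ultimately show ?thesis by (simp add: X_def power_mult_distrib)
  qed
  also have "\<dots> \<le> T\<^sup>2 * ((1 + X\<^sup>2) powr a / M\<^sup>2)"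
    using mult_left_mono[OF z_sq, of "(1 + X\<^sup>2) powr a"] by (simp add: mult.commute)
  also have "\<dots> \<le> T\<^sup>2 * (2 powr a * X powr (-(real k * (1 - b) + 1)) * Y powr (-(real l * b)))"
    using sobolev_weight_le[OF X1 Y1 assms(3-5)]
    by (intro mult_left_mono) (auto simp: a_def M_def)
  finally show ?thesis by (simp add: a_def X_def Y_def mult.assoc)
qed

lemma W2_norm_le_of_coeff_bound:
  fixes c :: coeffs and k l :: nat and b T :: real
  assumes "trig_poly c" "proper c" "k > 0" "0 < b" "b < 1" "real l * b > 1"
    and bound: "\<And>p. cmod (c p) * max (\<bar>real_of_int (fst p)\<bar>^k) (\<bar>real_of_int (snd p)\<bar>^l) \<le> T"
  defines "K \<equiv> 2 powr ((real k - 1)/2) * (2 * zeta_sum (real k * (1 - b) + 1) * (2 * zeta_sum (real l * b)))"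
  shows "W2_norm ((real k - 1)/2) 0 c \<le> T * sqrt K"
proof -
  define a where "a = (real k - 1)/2"
  define s where "s = real k * (1 - b) + 1"
  define t where "t = real l * b"
  let ?S = "{p. c p \<noteq> 0}"
  let ?w = "\<lambda>p. \<bar>real_of_int (fst p)\<bar> powr (-s) * \<bar>real_of_int (snd p)\<bar> powr (-t)"
  have fin: "finite ?S" using \<open>trig_poly c\<close> unfolding trig_poly_def .
  have "l > 0" using \<open>real l * b > 1\<close> by (cases l) auto
  then have T0: "T \<ge> 0" using bound[of "(0,0)"] \<open>k > 0\<close> by (simp add: power_0_left)
  have s1: "s > 1" and t1: "t > 1"
    using assms(3-6) by (simp_all add: s_def t_def)
  have nonzero: "fst p \<noteq> 0 \<and> snd p \<noteq> 0" if "p \<in> ?S" for p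
    using \<open>proper c\<close> that unfolding proper_def by (cases p) auto
  have "(\<Sum>p\<in>?S. ((1 + (of_int (fst p))\<^sup>2) powr (a/2) * (1 + (of_int (snd p))\<^sup>2) powr (0/2) * cmod (c p))\<^sup>2)
      \<le> (\<Sum>p\<in>?S. T\<^sup>2 * (2 powr a * ?w p))"
  proof (rule sum_mono)
    fix p assume p: "p \<in> ?S"
    show "((1 + (of_int (fst p))\<^sup>2) powr (a/2) * (1 + (of_int (snd p))\<^sup>2) powr (0/2) * cmod (c p))\<^sup>2
        \<le> T\<^sup>2 * (2 powr a * ?w p)"
      unfolding a_def s_def t_def
      by (rule sobolev_term_le) (use nonzero[OF p] assms(3-5) bound in auto)
  qed
  also have "\<dots> = T\<^sup>2 * 2 powr a * (\<Sum>p\<in>?S. ?w p)"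
    by (simp add: sum_distrib_left mult.assoc)
  also have "\<dots> \<le> T\<^sup>2 * 2 powr a * (2 * zeta_sum s * (2 * zeta_sum t))"
    by (intro mult_left_mono sum_lattice_powr_le_zeta_sum fin s1 t1) (use nonzero in auto)
  also have "\<dots> = T\<^sup>2 * K" by (simp add: K_def a_def s_def t_def)
  finally have "W2_norm a 0 c \<le> sqrt (T\<^sup>2 * K)"
    unfolding W2_norm_def by (intro real_sqrt_le_mono) simp
  also have "\<dots> = T * sqrt K" using T0 by (simp add: real_sqrt_mult)
  finally show ?thesis by (simp add: a_def)
qed

theorem lemma10:
  fixes k l N :: nat
  assumes "k > 0" and "l > 1" and "N > 0"
  shows "\<exists>C::real. \<forall>(\<mu>::nat \<Rightarrow> coeffs) (\<phi>::nat \<Rightarrow> coeffs).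
    (\<forall>j\<le>N. trig_poly (\<mu> j) \<and> proper (\<mu> j)) \<and>
    (\<forall>j\<in>{1..N}. trig_poly (\<phi> j) \<and> proper (\<phi> j)) \<and>
    (\<forall>p. - d1 k (\<phi> 1) p = \<mu> 0 p) \<and>
    (\<forall>j\<in>{1..<N}. \<forall>p. d2 l (\<phi> j) p - d1 k (\<phi> (Suc j)) p = \<mu> j p) \<and>
    (\<forall>p. d2 l (\<phi> N) p = \<mu> N p)
    \<longrightarrow> (\<Sum>j=1..N. W2_norm ((real k - 1) / 2) 0 (\<phi> j)) \<le> C * (\<Sum>j=0..N. L1_norm (\<mu> j))"
proof -
  define b where "b = (real l + 1) / (2 * real l)"
  define K where "K = 2 powr ((real k - 1)/2) *
    (2 * zeta_sum (real k * (1 - b) + 1) * (2 * zeta_sum (real l * b)))"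
  have b: "0 < b" "b < 1" "real l * b > 1"
    using \<open>l > 1\<close> by (auto simp: b_def field_simps)
  show ?thesis
  proof (intro exI[of _ "real N * sqrt K"] allI impI, elim conjE)
    fix \<mu> \<phi> :: "nat \<Rightarrow> coeffs"
    assume \<mu>: "\<forall>j\<le>N. trig_poly (\<mu> j) \<and> proper (\<mu> j)"
      and \<phi>: "\<forall>j\<in>{1..N}. trig_poly (\<phi> j) \<and> proper (\<phi> j)"
      and eqs: "\<forall>p. - d1 k (\<phi> 1) p = \<mu> 0 p"
        "\<forall>j\<in>{1..<N}. \<forall>p. d2 l (\<phi> j) p - d1 k (\<phi> (Suc j)) p = \<mu> j p"
        "\<forall>p. d2 l (\<phi> N) p = \<mu> N p"
    let ?T = "\<Sum>j=0..N. L1_norm (\<mu> j)"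
    have "W2_norm ((real k - 1) / 2) 0 (\<phi> j) \<le> ?T * sqrt K" if "j \<in> {1..N}" for j
      unfolding K_def using \<phi> that \<mu> \<open>k > 0\<close>
      by (intro W2_norm_le_of_coeff_bound[OF _ _ _ b] coeff_mult_max_le_sum_L1_norm[OF _ eqs]) auto
    then have "(\<Sum>j=1..N. W2_norm ((real k - 1) / 2) 0 (\<phi> j)) \<le> (\<Sum>j=1..N. ?T * sqrt K)"
      by (rule sum_mono)
    then show "(\<Sum>j=1..N. W2_norm ((real k - 1) / 2) 0 (\<phi> j)) \<le> real N * sqrt K * ?T"
      by (simp add: mult.commute)
  qed
qed

end
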